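(* Let $(A,\succ,\prec)$ be a Leibniz-dendriform algebra and $r\in A\otimes A$ with $S(r)=0$, $r+\tau(r)$ invariant and $T_{r+\tau(r)}:A^*\to A$ a linear isomorphism (i.e. $(A,\succ,\prec,\Delta_{\succ,r},\Delta_{\prec,r})$ is factorizable). Define $\Phi:A^*\to A\oplus A$ by $\Phi(\zeta)=(T_r(\zeta),-T_{\tau(r)}(\zeta))$. Then $\mathrm{Im}(\Phi)$ is a Leibniz-dendriform subalgebra of the direct product Leibniz-dendriform algebra $A\oplus A$ (componentwise operations), and $\Phi$ is an isomorphism of Leibniz-dendriform algebras from $(A^*,\succ_r,\prec_r)$ onto $\mathrm{Im}(\Phi)$. Moreover, every $x\in A$ has a unique decomposition $x=x_1-x_2$ with $(x_1,x_2)\in\mathrm{Im}(\Phi)$.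
   Context: $\langle\cdot,\cdot\rangle$ is the natural pairing, $I$ the identity, $\tau(a\otimes b)=b\otimes a$. A Leibniz-dendriform algebra is a vector space $A$ with bilinear operations $\succ,\prec$ such that, with $x\circ y:=x\succ y+x\prec y$, for all $x,y,z$: $(x\circ y)\succ z=x\succ(y\succ z)-y\succ(x\succ z)$, $y\prec(x\circ z)+(x\succ y)\prec z=x\succ(y\prec z)$, $x\prec(y\circ z)=(x\prec y)\prec z+y\succ(x\prec z)$. Write $x\odot y:=x\succ y+y\prec x$, $x\star y:=x\circ y+y\circ x$; $L_*(x)y=x*y$, $R_*(x)y=y*x$; $L_\odot:=L_\succ+R_\prec$, $R_\odot:=R_\succ+L_\prec$, $L_\star:=L_\circ+R_\circ$; for $f:A\to\mathrm{End}(A)$, $f^*:A\to\mathrm{End}(A^* )$ is $\langle f^*(x)\xi,v\rangle=-\langle\xi,f(x)v\rangle$. For $r=\sum_ia_i\otimes b_i$: $T_r:A^*\to A$, $\langle T_r(\zeta),\eta\rangle=\langle r,\zeta\otimes\eta\rangle$; $S(r):=\sum_{i,j}\big(a_i\otimes a_j\otimes (b_j\circ b_i)-a_i\otimes (b_i\odot a_j)\otimes b_j-(a_i\succ a_j)\otimes b_i\otimes b_j\big)$. $s\in A\otimes A$ is invariant if for all $x$: $(L_\odot(x)\otimes I-I\otimes R_\circ(x))s=0$ and $(L_\star(x)\otimes I-I\otimes R_\prec(x))\tau(s)=0$. Operations on $A^*$: $\zeta\succ_r\eta=L_\circ^*(T_r(\zeta))\eta-R_\odot^*(T_{\tau(r)}(\eta))\zeta$,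 $\zeta\prec_r\eta=L_\prec^*(T_{\tau(r)}(\zeta))\eta-L_\star^*(T_r(\eta))\zeta$ (the duals of $\Delta_{\succ,r}(x)=(L_\odot(x)\otimes I-I\otimes R_\circ(x))r$, $\Delta_{\prec,r}(x)=(L_\star(x)\otimes I-I\otimes R_\prec(x))\tau(r)$). *)

theory Defs
  imports Main
begin

text \<open>A finite-dimensional vector space A over a field 'k is modelled in coordinates
  w.r.t. a basis indexed by a finite type 'n: vectors are functions 'n \<Rightarrow> 'k.
  The dual space A* is identified with the same type via the dual basis, so the
  natural pairing is the dot product.  Tensors in A\<otimes>A (resp. A\<otimes>A\<otimes>A) are
  their coefficient arrays w.r.t. e_p\<otimes>e_q (resp. e_p\<otimes>e_q\<otimes>e_s).\<close>

type_synonym ('k,'n) vect = "'n \<Rightarrow> 'k"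
type_synonym ('k,'n) tens2 = "'n \<Rightarrow> 'n \<Rightarrow> 'k"
type_synonym ('k,'n) tens3 = "'n \<Rightarrow> 'n \<Rightarrow> 'n \<Rightarrow> 'k"
type_synonym ('k,'n) bop = "('k,'n) vect \<Rightarrow> ('k,'n) vect \<Rightarrow> ('k,'n) vect"

definition vadd :: "('k::field,'n) vect \<Rightarrow> ('k,'n) vect \<Rightarrow> ('k,'n) vect" where
  "vadd u v = (\<lambda>i. u i + v i)"
definition vsub :: "('k::field,'n) vect \<Rightarrow> ('k,'n) vect \<Rightarrow> ('k,'n) vect" where
  "vsub u v = (\<lambda>i. u i - v i)"
definition vneg :: "('k::field,'n) vect \<Rightarrow> ('k,'n) vect" where
  "vneg u = (\<lambda>i. - u i)"
definition vscale :: "'k::field \<Rightarrow> ('k,'n) vect \<Rightarrow> ('k,'n) vect" where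
  "vscale c u = (\<lambda>i. c * u i)"
definition vzero :: "('k::field,'n) vect" where
  "vzero = (\<lambda>i. 0)"

definition ebas :: "'n \<Rightarrow> ('k::field,'n) vect" where
  "ebas j = (\<lambda>i. if i = j then 1 else 0)"

definition pair :: "('k::field,'n::finite) vect \<Rightarrow> ('k,'n) vect \<Rightarrow> 'k" where
  "pair \<xi> v = (\<Sum>i\<in>UNIV. \<xi> i * v i)"

definition bilinear_op :: "('k::field,'n) bop \<Rightarrow> bool" where
  "bilinear_op f \<longleftrightarrow>
     (\<forall>x y z. f (vadd x y) z = vadd (f x z) (f y z)) \<and>
     (\<forall>x y z. f x (vadd y z) = vadd (f x y) (f x z)) \<and>
     (\<forall>c x y. f (vscale c x) y = vscale c (f x y)) \<and>
     (\<forall>c x y. f x (vscale c y) = vscale c (f x y))"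

definition circ_op :: "('k::field,'n) bop \<Rightarrow> ('k,'n) bop \<Rightarrow> ('k,'n) bop" where
  "circ_op sc pr x y = vadd (sc x y) (pr x y)"

definition odot_op :: "('k::field,'n) bop \<Rightarrow> ('k,'n) bop \<Rightarrow> ('k,'n) bop" where
  "odot_op sc pr x y = vadd (sc x y) (pr y x)"

definition star_op :: "('k::field,'n) bop \<Rightarrow> ('k,'n) bop \<Rightarrow> ('k,'n) bop" where
  "star_op sc pr x y = vadd (circ_op sc pr x y) (circ_op sc pr y x)"

definition LD_alg :: "('k::field,'n) bop \<Rightarrow> ('k,'n) bop \<Rightarrow> bool" where
  "LD_alg sc pr \<longleftrightarrow> bilinear_op sc \<and> bilinear_op pr \<and>
    (\<forall>x y z. sc (circ_op sc pr x y) z = vsub (sc x (sc y z)) (sc y (sc x z))) \<and>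
    (\<forall>x y z. vadd (pr y (circ_op sc pr x z)) (pr (sc x y) z) = sc x (pr y z)) \<and>
    (\<forall>x y z. pr x (circ_op sc pr y z) = vadd (pr (pr x y) z) (sc y (pr x z)))"

text \<open>Dual representation: for f : A \<rightarrow> End(A), \<langle>f^*(x)\<xi>, v\<rangle> = -\<langle>\<xi>, f(x)v\<rangle>.
  Here f is given as a two-argument function, f x v = f(x)v.\<close>
definition dual_rep :: "(('k::field,'n::finite) vect \<Rightarrow> ('k,'n) vect \<Rightarrow> ('k,'n) vect)
    \<Rightarrow> ('k,'n) vect \<Rightarrow> ('k,'n) vect \<Rightarrow> ('k,'n) vect" where
  "dual_rep f x \<xi> = (\<lambda>j. - pair \<xi> (f x (ebas j)))"

definition flip :: "('k::field,'n) tens2 \<Rightarrow> ('k,'n) tens2" where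
  "flip s = (\<lambda>p q. s q p)"

definition tadd :: "('k::field,'n) tens2 \<Rightarrow> ('k,'n) tens2 \<Rightarrow> ('k,'n) tens2" where
  "tadd s t = (\<lambda>p q. s p q + t p q)"

text \<open>T_r : A* \<rightarrow> A, \<langle>T_r(\<zeta>), \<eta>\<rangle> = \<langle>r, \<zeta>\<otimes>\<eta>\<rangle>.\<close>
definition Tmap :: "('k::field,'n::finite) tens2 \<Rightarrow> ('k,'n) vect \<Rightarrow> ('k,'n) vect" where
  "Tmap r \<zeta> = (\<lambda>q. \<Sum>p\<in>UNIV. r p q * \<zeta> p)"

text \<open>(F \<otimes> G) s for linear maps F, G on A.\<close>
definition tapp :: "(('k::field,'n::finite) vect \<Rightarrow> ('k,'n) vect) \<Rightarrow> (('k,'n) vect \<Rightarrow> ('k,'n) vect)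
    \<Rightarrow> ('k,'n) tens2 \<Rightarrow> ('k,'n) tens2" where
  "tapp F G s = (\<lambda>a b. \<Sum>p\<in>UNIV. \<Sum>q\<in>UNIV. s p q * F (ebas p) a * G (ebas q) b)"

definition invariant :: "('k::field,'n::finite) bop \<Rightarrow> ('k,'n) bop \<Rightarrow> ('k,'n) tens2 \<Rightarrow> bool" where
  "invariant sc pr s \<longleftrightarrow>
    (\<forall>x. \<forall>a b. tapp (\<lambda>v. odot_op sc pr x v) id s a b - tapp id (\<lambda>v. circ_op sc pr v x) s a b = 0) \<and>
    (\<forall>x. \<forall>a b. tapp (\<lambda>v. star_op sc pr x v) id (flip s) a b - tapp id (\<lambda>v. pr v x) (flip s) a b = 0)"

definition Sr :: "('k::field,'n::finite) bop \<Rightarrow> ('k,'n) bop \<Rightarrow> ('k,'n) tens2 \<Rightarrow> ('k,'n) tens3" where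
  "Sr sc pr r = (\<lambda>a b c. \<Sum>p\<in>UNIV. \<Sum>q\<in>UNIV. \<Sum>s\<in>UNIV. \<Sum>t\<in>UNIV. r p q * r s t *
      (ebas p a * ebas s b * circ_op sc pr (ebas t) (ebas q) c
       - ebas p a * odot_op sc pr (ebas q) (ebas s) b * ebas t c
       - sc (ebas p) (ebas s) a * ebas q b * ebas t c))"

definition succ_r :: "('k::field,'n::finite) bop \<Rightarrow> ('k,'n) bop \<Rightarrow> ('k,'n) tens2 \<Rightarrow> ('k,'n) bop" where
  "succ_r sc pr r \<zeta> \<eta> = vsub (dual_rep (\<lambda>x v. circ_op sc pr x v) (Tmap r \<zeta>) \<eta>)
                              (dual_rep (\<lambda>x v. odot_op sc pr v x) (Tmap (flip r) \<eta>) \<zeta>)"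

definition prec_r :: "('k::field,'n::finite) bop \<Rightarrow> ('k,'n) bop \<Rightarrow> ('k,'n) tens2 \<Rightarrow> ('k,'n) bop" where
  "prec_r sc pr r \<zeta> \<eta> = vsub (dual_rep (\<lambda>x v. pr x v) (Tmap (flip r) \<zeta>) \<eta>)
                              (dual_rep (\<lambda>x v. star_op sc pr x v) (Tmap r \<eta>) \<zeta>)"

definition Phi :: "('k::field,'n::finite) tens2 \<Rightarrow> ('k,'n) vect \<Rightarrow> ('k,'n) vect \<times> ('k,'n) vect" where
  "Phi r \<zeta> = (Tmap r \<zeta>, vneg (Tmap (flip r) \<zeta>))"

definition prod_op :: "('k::field,'n) bop \<Rightarrow> ('k,'n) vect \<times> ('k,'n) vect \<Rightarrow> ('k,'n) vect \<times> ('k,'n) vect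
    \<Rightarrow> ('k,'n) vect \<times> ('k,'n) vect" where
  "prod_op f u w = (f (fst u) (fst w), f (snd u) (snd w))"

definition padd :: "('k::field,'n) vect \<times> ('k,'n) vect \<Rightarrow> ('k,'n) vect \<times> ('k,'n) vect
    \<Rightarrow> ('k,'n) vect \<times> ('k,'n) vect" where
  "padd u w = (vadd (fst u) (fst w), vadd (snd u) (snd w))"

definition pscale :: "'k::field \<Rightarrow> ('k,'n) vect \<times> ('k,'n) vect \<Rightarrow> ('k,'n) vect \<times> ('k,'n) vect" where
  "pscale c u = (vscale c (fst u), vscale c (snd u))"

definition LD_subalg_prod :: "('k::field,'n) bop \<Rightarrow> ('k,'n) bop
    \<Rightarrow> (('k,'n) vect \<times> ('k,'n) vect) set \<Rightarrow> bool" where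
  "LD_subalg_prod sc pr B \<longleftrightarrow> (vzero, vzero) \<in> B \<and>
     (\<forall>u\<in>B. \<forall>w\<in>B. padd u w \<in> B) \<and> (\<forall>c. \<forall>u\<in>B. pscale c u \<in> B) \<and>
     (\<forall>u\<in>B. \<forall>w\<in>B. prod_op sc u w \<in> B \<and> prod_op pr u w \<in> B)"

end

(* Write T = T_r, T' = T_tau(r) and J = T + T' = T_(r + tau(r)).  Paired with elements of A*,
   the hypothesis S(r) = 0 and the invariance of r + tau(r) become scalar identities, and
   pairing with an arbitrary w in A* these show that T and -T' are homomorphisms from
   (A*, succ_r, prec_r) to (A, succ, prec).  Hence Phi = (T, -T') is a homomorphism into
   A (+) A, injective because fst - snd of Phi is the bijection J.  So its image is a
   subalgebra, the Leibniz-dendriform identities pull back along Phi to A*, and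
   x = x1 - x2 with (x1, x2) = Phi (J^-1 x) is the only decomposition of x through the image. *)

theory Submission
  imports Defs
begin

lemma pair_vadd_left [simp]: "pair (vadd u v) x = pair u x + pair v x"
  by (simp add: pair_def vadd_def distrib_right sum.distrib)

lemma pair_vadd_right [simp]: "pair x (vadd u v) = pair x u + pair x v"
  by (simp add: pair_def vadd_def distrib_left sum.distrib)

lemma pair_vsub_left [simp]: "pair (vsub u v) x = pair u x - pair v x"
  by (simp add: pair_def vsub_def left_diff_distrib sum_subtractf)

lemma pair_vneg_right [simp]: "pair x (vneg u) = - pair x u"
  by (simp add: pair_def vneg_def sum_negf)

lemma pair_vscale_left [simp]: "pair (vscale c u) x = c * pair u x"
  by (simp add: pair_def vscale_def sum_distrib_left algebra_simps)

lemma pair_vscale_right [simp]: "pair x (vscale c u) = c * pair x u"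
  by (simp add: pair_def vscale_def sum_distrib_left algebra_simps)

lemma pair_ebas_left [simp]: "pair (ebas i) u = u i"
proof -
  have "pair (ebas i) u = (\<Sum>j\<in>UNIV. if j = i then u i else 0)"
    unfolding pair_def by (rule sum.cong) (auto simp: ebas_def)
  then show ?thesis by simp
qed

lemma mult_ebas: "x * ebas q b = (if q = b then x else 0)"
  by (simp add: ebas_def)

lemma ebas_mult_left: "ebas q b * x = (if q = b then x else 0)"
  by (simp add: ebas_def)

lemma if_zero_mult: "(if P then x else 0) * y = (if P then x * y else (0::'a::mult_zero))"
  by simp

lemma mult_if_zero: "y * (if P then x else 0) = (if P then y * x else (0::'a::mult_zero))"
  by simp

lemma sum_if_zero: "(\<Sum>x\<in>A. if P then f x else 0) = (if P then sum f A else 0)"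
  by simp

lemma vect_eqI: "(\<And>w. pair w u = pair w v) \<Longrightarrow> u = v"
  by (rule ext) (metis pair_ebas_left)

lemma vsub_eq_vadd_vscale: "vsub u v = vadd u (vscale (-1) v)"
  by (simp add: vsub_def vadd_def vscale_def)

lemma vneg_eq_vscale: "vneg u = vscale (-1) u"
  by (simp add: vneg_def vscale_def)

lemma vneg_vadd: "vneg (vadd u v) = vadd (vneg u) (vneg v)"
  by (simp add: vneg_def vadd_def)

lemma vneg_vscale: "vneg (vscale c u) = vscale c (vneg u)"
  by (simp add: vneg_def vscale_def)

lemma vneg_vneg [simp]: "vneg (vneg u) = u"
  by (simp add: vneg_def)

lemma vsub_vneg: "vsub u (vneg v) = vadd u v"
  by (simp add: vneg_def vsub_def vadd_def)

lemma vadd_vadd_swap: "vadd (vadd a b) (vadd c d) = vadd (vadd a c) (vadd b d)"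
  by (simp add: vadd_def algebra_simps)

lemma vadd_vscale: "vadd (vscale c a) (vscale c b) = vscale c (vadd a b)"
  by (simp add: vadd_def vscale_def algebra_simps)

definition linear_form :: "(('k::field,'n) vect \<Rightarrow> 'k) \<Rightarrow> bool" where
  "linear_form \<phi> \<longleftrightarrow>
     (\<forall>x y. \<phi> (vadd x y) = \<phi> x + \<phi> y) \<and> (\<forall>c x. \<phi> (vscale c x) = c * \<phi> x)"

definition linear_vmap :: "(('k::field,'n) vect \<Rightarrow> ('k,'m) vect) \<Rightarrow> bool" where
  "linear_vmap F \<longleftrightarrow>
     (\<forall>x y. F (vadd x y) = vadd (F x) (F y)) \<and> (\<forall>c x. F (vscale c x) = vscale c (F x))"

lemma linear_form_expansion:
  fixes \<phi> :: "('k::field,'n::finite) vect \<Rightarrow> 'k"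
  assumes "linear_form \<phi>"
  shows "\<phi> v = (\<Sum>a\<in>UNIV. v a * \<phi> (ebas a))"
proof -
  have add: "\<phi> (vadd x y) = \<phi> x + \<phi> y" and scale: "\<phi> (vscale c x) = c * \<phi> x" for x y c
    using assms unfolding linear_form_def by auto
  have partial: "\<phi> (\<lambda>i. \<Sum>a\<in>S. v a * ebas a i) = (\<Sum>a\<in>S. v a * \<phi> (ebas a))"
    if "finite S" for S
    using that
  proof (induction S rule: finite_induct)
    case empty
    have "(\<lambda>i::'n. 0::'k) = vscale 0 v" by (simp add: vscale_def)
    then show ?case using scale[of 0 v] by simp
  next
    case (insert a F)
    have "(\<lambda>i. \<Sum>b\<in>insert a F. v b * ebas b i)
        = vadd (vscale (v a) (ebas a)) (\<lambda>i. \<Sum>b\<in>F. v b * ebas b i)"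
      using insert by (simp add: vadd_def vscale_def)
    then show ?case using insert add scale by simp
  qed
  have "v = (\<lambda>i. \<Sum>a\<in>UNIV. v a * ebas a i)"
    by (simp add: ebas_def if_distrib cong: if_cong)
  then show ?thesis using partial[of UNIV] by simp
qed

lemma linear_form_eq_zeroI:
  fixes \<phi> :: "('k::field,'n::finite) vect \<Rightarrow> 'k"
  assumes "linear_form \<phi>" and "\<And>a. \<phi> (ebas a) = 0"
  shows "\<phi> v = 0"
  using linear_form_expansion[OF assms(1), of v] by (simp add: assms(2))

lemma linear_form_pair_comp:
  "linear_vmap F \<Longrightarrow> linear_form (\<lambda>v. pair w (F v))"
  by (simp add: linear_form_def linear_vmap_def)

lemma bilinear_opD:
  assumes "bilinear_op f"
  shows "f (vadd x y) z = vadd (f x z) (f y z)" "f x (vadd y z) = vadd (f x y) (f x z)"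
    "f (vscale c x) y = vscale c (f x y)" "f x (vscale c y) = vscale c (f x y)"
    "f (vneg x) y = vneg (f x y)" "f x (vneg y) = vneg (f x y)"
    "f (vsub x y) z = vsub (f x z) (f y z)" "f x (vsub y z) = vsub (f x y) (f x z)"
  using assms unfolding bilinear_op_def by (simp_all add: vneg_eq_vscale vsub_eq_vadd_vscale)

lemma bilinear_op_linear_vmap:
  assumes "bilinear_op f"
  shows "linear_vmap (f x)" and "linear_vmap (\<lambda>v. f v x)"
  using assms by (simp_all add: linear_vmap_def bilinear_opD)

lemma bilinear_op_pair_expansion:
  fixes f :: "('k::field,'n::finite) bop"
  assumes "bilinear_op f"
  shows "pair w (f u v) = (\<Sum>j\<in>UNIV. \<Sum>k\<in>UNIV. u j * v k * pair w (f (ebas j) (ebas k)))"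
proof -
  have "pair w (f u v) = (\<Sum>j\<in>UNIV. u j * pair w (f (ebas j) v))"
    by (rule linear_form_expansion) (simp add: linear_form_def bilinear_opD[OF assms])
  also have "\<dots> = (\<Sum>j\<in>UNIV. u j * (\<Sum>k\<in>UNIV. v k * pair w (f (ebas j) (ebas k))))"
    by (subst linear_form_expansion[where \<phi>="\<lambda>v. pair w (f (ebas _) v)"])
       (simp_all add: linear_form_def bilinear_opD[OF assms])
  finally show ?thesis by (simp add: sum_distrib_left mult.assoc)
qed

lemma bilinear_circ_op:
  assumes "bilinear_op sc" and "bilinear_op pr"
  shows "bilinear_op (circ_op sc pr)"
  using assms unfolding bilinear_op_def circ_op_def by (simp add: vadd_vadd_swap vadd_vscale)

lemma bilinear_odot_op:
  assumes "bilinear_op sc" and "bilinear_op pr"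
  shows "bilinear_op (odot_op sc pr)"
  using assms unfolding bilinear_op_def odot_op_def by (simp add: vadd_vadd_swap vadd_vscale)

lemma bilinear_star_op:
  assumes "bilinear_op sc" and "bilinear_op pr"
  shows "bilinear_op (star_op sc pr)"
  using bilinear_circ_op[OF assms] unfolding bilinear_op_def star_op_def
  by (simp add: vadd_vadd_swap vadd_vscale)

lemma Tmap_vadd: "Tmap r (vadd x y) = vadd (Tmap r x) (Tmap r y)"
  by (simp add: Tmap_def vadd_def sum.distrib algebra_simps)

lemma Tmap_vscale: "Tmap r (vscale c x) = vscale c (Tmap r x)"
  by (simp add: Tmap_def vscale_def sum_distrib_left algebra_simps)

lemma linear_vmap_Tmap: "linear_vmap (Tmap r)"
  by (simp add: linear_vmap_def Tmap_vadd Tmap_vscale)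

lemma Tmap_ebas: "Tmap r (ebas b) = (\<lambda>q. r b q)"
  by (simp add: Tmap_def ebas_def if_distrib cong: if_cong)

lemma Tmap_tadd: "Tmap (tadd r s) v = vadd (Tmap r v) (Tmap s v)"
  by (simp add: Tmap_def tadd_def vadd_def distrib_right sum.distrib)

lemma pair_Tmap_adjoint: "pair w (Tmap r z) = pair z (Tmap (flip r) w)"
  unfolding pair_def Tmap_def flip_def
  by (simp add: sum_distrib_left, subst sum.swap) (simp add: algebra_simps)

lemma flip_flip [simp]: "flip (flip r) = r"
  by (simp add: flip_def)

lemma flip_tadd_flip: "flip (tadd r (flip r)) = tadd r (flip r)"
  by (simp add: flip_def tadd_def fun_eq_iff add.commute)

lemma pair_dual_rep:
  assumes "linear_vmap (f x)"
  shows "pair (dual_rep f x \<xi>) v = - pair \<xi> (f x v)"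
proof -
  have "- pair \<xi> (f x v) = (\<Sum>a\<in>UNIV. v a * (- pair \<xi> (f x (ebas a))))"
    using assms by (subst linear_form_expansion) (simp_all add: linear_form_def linear_vmap_def)
  then show ?thesis by (simp add: pair_def dual_rep_def mult.commute)
qed

lemma tapp_id_right:
  assumes "linear_vmap F"
  shows "tapp F id s a b = pair (ebas a) (F (Tmap (flip s) (ebas b)))"
proof -
  have "pair (ebas a) (F (Tmap (flip s) (ebas b)))
      = (\<Sum>j\<in>UNIV. Tmap (flip s) (ebas b) j * pair (ebas a) (F (ebas j)))"
    by (rule linear_form_expansion[OF linear_form_pair_comp[OF assms]])
  then show ?thesis
    by (simp add: tapp_def Tmap_ebas flip_def mult_ebas)
qed

lemma tapp_flip: "tapp F G s a b = tapp G F (flip s) b a"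
  unfolding tapp_def flip_def by (subst sum.swap) (simp add: mult_ac)

lemma tapp_id_left:
  "linear_vmap G \<Longrightarrow> tapp id G s a b = pair (ebas b) (G (Tmap s (ebas a)))"
  by (simp add: tapp_flip[of id] tapp_id_right)

lemma Sr_reduced:
  "Sr sc pr r a b c =
     (\<Sum>q\<in>UNIV. \<Sum>t\<in>UNIV. r a q * r b t * circ_op sc pr (ebas t) (ebas q) c)
   - (\<Sum>q\<in>UNIV. \<Sum>s\<in>UNIV. r a q * r s c * odot_op sc pr (ebas q) (ebas s) b)
   - (\<Sum>p\<in>UNIV. \<Sum>s\<in>UNIV. r p b * r s c * sc (ebas p) (ebas s) a)"
  unfolding Sr_def
  by (simp add: right_diff_distrib sum_subtractf mult_ebas ebas_mult_left if_zero_mult mult_if_zero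
      sum_if_zero mult.assoc)

lemma bilinear_form_eq_zeroI:
  fixes B :: "('k::field,'n::finite) vect \<Rightarrow> ('k,'n) vect \<Rightarrow> 'k"
  assumes "\<And>\<eta>. linear_form (\<lambda>\<xi>. B \<xi> \<eta>)" and "\<And>\<xi>. linear_form (B \<xi>)"
    and "\<And>a b. B (ebas a) (ebas b) = 0"
  shows "B \<xi> \<eta> = 0"
proof -
  have "B (ebas a) \<eta> = 0" for a
    by (rule linear_form_eq_zeroI[OF assms(2) assms(3)])
  then show ?thesis
    by (rule linear_form_eq_zeroI[OF assms(1)])
qed

lemma LD_alg_pullback:
  fixes sc' pr' sc pr :: "('k::field,'n::finite) bop"
  assumes LD: "LD_alg sc pr"
    and f_linear: "linear_vmap f" and g_linear: "linear_vmap g"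
    and f_hom: "\<And>x y. f (sc' x y) = sc (f x) (f y)" "\<And>x y. f (pr' x y) = pr (f x) (f y)"
    and g_hom: "\<And>x y. g (sc' x y) = sc (g x) (g y)" "\<And>x y. g (pr' x y) = pr (g x) (g y)"
    and jointly_injective: "\<And>x y. f x = f y \<Longrightarrow> g x = g y \<Longrightarrow> x = y"
  shows "LD_alg sc' pr'"
proof -
  have bilinear: "bilinear_op sc" "bilinear_op pr"
    and identities:
      "\<And>x y z. sc (circ_op sc pr x y) z = vsub (sc x (sc y z)) (sc y (sc x z))"
      "\<And>x y z. vadd (pr y (circ_op sc pr x z)) (pr (sc x y) z) = sc x (pr y z)"
      "\<And>x y z. pr x (circ_op sc pr y z) = vadd (pr (pr x y) z) (sc y (pr x z))"
    using LD unfolding LD_alg_def by auto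
  have f_vsub: "f (vsub x y) = vsub (f x) (f y)" and g_vsub: "g (vsub x y) = vsub (g x) (g y)" for x y
    using f_linear g_linear by (simp_all add: linear_vmap_def vsub_eq_vadd_vscale)
  have f_circ: "f (circ_op sc' pr' x y) = circ_op sc pr (f x) (f y)"
    and g_circ: "g (circ_op sc' pr' x y) = circ_op sc pr (g x) (g y)" for x y
    using f_linear g_linear by (simp_all add: linear_vmap_def circ_op_def f_hom g_hom)
  note transport = f_linear[unfolded linear_vmap_def] g_linear[unfolded linear_vmap_def]
    f_hom g_hom f_vsub g_vsub f_circ g_circ bilinear_opD[OF bilinear(1)] bilinear_opD[OF bilinear(2)]
  (* f and g send each axiom for sc', pr' to the same axiom for sc, pr *)
  show ?thesis
    unfolding LD_alg_def bilinear_op_def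
    by (intro conjI allI; rule jointly_injective; simp only: transport; rule identities)
qed

lemma LD_subalg_prod_range:
  assumes add: "\<And>\<zeta> \<eta>. \<Phi> (vadd \<zeta> \<eta>) = padd (\<Phi> \<zeta>) (\<Phi> \<eta>)"
    and scale: "\<And>c \<zeta>. \<Phi> (vscale c \<zeta>) = pscale c (\<Phi> \<zeta>)"
    and hom: "\<And>\<zeta> \<eta>. \<Phi> (sc' \<zeta> \<eta>) = prod_op sc (\<Phi> \<zeta>) (\<Phi> \<eta>)"
      "\<And>\<zeta> \<eta>. \<Phi> (pr' \<zeta> \<eta>) = prod_op pr (\<Phi> \<zeta>) (\<Phi> \<eta>)"
  shows "LD_subalg_prod sc pr (range \<Phi>)"
  unfolding LD_subalg_prod_def
proof (intro conjI ballI allI)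
  have "(vzero, vzero) = pscale 0 (\<Phi> vzero)"
    by (simp add: pscale_def vscale_def vzero_def)
  also have "\<dots> = \<Phi> (vscale 0 vzero)"
    by (rule scale[symmetric])
  finally show "(vzero, vzero) \<in> range \<Phi>"
    by (metis rangeI)
next
  fix u w assume "u \<in> range \<Phi>" and "w \<in> range \<Phi>"
  then obtain \<zeta> \<eta> where u: "u = \<Phi> \<zeta>" and w: "w = \<Phi> \<eta>"
    by blast
  show "padd u w \<in> range \<Phi>"
    unfolding u w add[symmetric] by (rule rangeI)
  show "prod_op sc u w \<in> range \<Phi>"
    unfolding u w hom(1)[symmetric] by (rule rangeI)
  show "prod_op pr u w \<in> range \<Phi>"
    unfolding u w hom(2)[symmetric] by (rule rangeI)
next
  fix c u assume "u \<in> range \<Phi>"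
  then obtain \<zeta> where u: "u = \<Phi> \<zeta>"
    by blast
  show "pscale c u \<in> range \<Phi>"
    unfolding u scale[symmetric] by (rule rangeI)
qed

lemma Phi_vadd: "Phi r (vadd \<zeta> \<eta>) = padd (Phi r \<zeta>) (Phi r \<eta>)"
  by (simp add: Phi_def padd_def Tmap_vadd vneg_vadd)

lemma Phi_vscale: "Phi r (vscale c \<zeta>) = pscale c (Phi r \<zeta>)"
  by (simp add: Phi_def pscale_def Tmap_vscale vneg_vscale)

lemma vsub_Phi: "vsub (fst (Phi r \<zeta>)) (snd (Phi r \<zeta>)) = Tmap (tadd r (flip r)) \<zeta>"
  by (simp add: Phi_def vsub_vneg Tmap_tadd)

lemma inj_Phi:
  assumes "inj (Tmap (tadd r (flip r)))"
  shows "inj (Phi r)"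
proof (rule injI)
  fix \<zeta> \<eta> assume "Phi r \<zeta> = Phi r \<eta>"
  then have "vsub (fst (Phi r \<zeta>)) (snd (Phi r \<zeta>)) = vsub (fst (Phi r \<eta>)) (snd (Phi r \<eta>))"
    by simp
  then show "\<zeta> = \<eta>"
    using assms by (simp add: vsub_Phi inj_eq)
qed

lemma Phi_unique_decomposition:
  assumes "bij (Tmap (tadd r (flip r)))"
  shows "\<exists>!u. u \<in> range (Phi r) \<and> x = vsub (fst u) (snd u)"
proof -
  obtain \<zeta> where "Tmap (tadd r (flip r)) \<zeta> = x"
    using assms by (metis bij_pointE)
  then have "Phi r \<zeta> \<in> range (Phi r) \<and> x = vsub (fst (Phi r \<zeta>)) (snd (Phi r \<zeta>))"
    by (simp add: vsub_Phi)
  moreover have "u = Phi r \<zeta>" if "u \<in> range (Phi r)" and "x = vsub (fst u) (snd u)" for u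
  proof -
    obtain \<eta> where u: "u = Phi r \<eta>"
      using \<open>u \<in> range (Phi r)\<close> by blast
    then have "Tmap (tadd r (flip r)) \<eta> = Tmap (tadd r (flip r)) \<zeta>"
      using that \<open>Tmap (tadd r (flip r)) \<zeta> = x\<close> by (simp add: vsub_Phi)
    then show ?thesis
      using assms u by (simp add: bij_is_inj inj_eq)
  qed
  ultimately show ?thesis
    by (intro ex1I[of _ "Phi r \<zeta>"]) blast+
qed

locale bilinear_pair =
  fixes sc pr :: "('k::field,'n::finite) bop"
  assumes sc_bilinear: "bilinear_op sc" and pr_bilinear: "bilinear_op pr"
begin

(* The paper's x \<circ> y is written x \<cdot> y, as \<circ> is function composition. *)
notation sc (infixl "\<succ>" 70) and pr (infixl "\<prec>" 70)
abbreviation circ (infixl "\<cdot>" 70) where "x \<cdot> y \<equiv> circ_op sc pr x y"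
abbreviation odot (infixl "\<odot>" 70) where "x \<odot> y \<equiv> odot_op sc pr x y"
abbreviation star (infixl "\<star>" 70) where "x \<star> y \<equiv> star_op sc pr x y"

lemmas bilinear_expand =
  bilinear_opD[OF sc_bilinear] bilinear_opD[OF pr_bilinear]
  circ_op_def odot_op_def star_op_def Tmap_vadd Tmap_vscale

lemma invariant_pairing:
  assumes "invariant sc pr s"
  shows invariant_pairing_odot: "pair \<xi> (x \<odot> Tmap (flip s) \<eta>) = pair \<eta> (Tmap s \<xi> \<cdot> x)"
    and invariant_pairing_star: "pair \<xi> (x \<star> Tmap s \<eta>) = pair \<eta> (Tmap (flip s) \<xi> \<prec> x)"
proof -
  note lin = bilinear_op_linear_vmap[OF bilinear_odot_op[OF sc_bilinear pr_bilinear]]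
    bilinear_op_linear_vmap[OF bilinear_circ_op[OF sc_bilinear pr_bilinear]]
    bilinear_op_linear_vmap[OF bilinear_star_op[OF sc_bilinear pr_bilinear]]
    bilinear_op_linear_vmap[OF pr_bilinear]
  define B1 where "B1 \<xi> \<eta> = pair \<xi> (x \<odot> Tmap (flip s) \<eta>) - pair \<eta> (Tmap s \<xi> \<cdot> x)" for \<xi> \<eta>
  define B2 where "B2 \<xi> \<eta> = pair \<xi> (x \<star> Tmap s \<eta>) - pair \<eta> (Tmap (flip s) \<xi> \<prec> x)" for \<xi> \<eta>
  have "B1 \<xi> \<eta> = 0"
  proof (rule bilinear_form_eq_zeroI[of B1])
    show "B1 (ebas a) (ebas b) = 0" for a b
      using assms unfolding invariant_def B1_def by (simp add: tapp_id_right tapp_id_left lin)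
  qed (simp_all add: B1_def linear_form_def bilinear_expand algebra_simps)
  then show "pair \<xi> (x \<odot> Tmap (flip s) \<eta>) = pair \<eta> (Tmap s \<xi> \<cdot> x)"
    by (simp add: B1_def)
  have "B2 \<xi> \<eta> = 0"
  proof (rule bilinear_form_eq_zeroI[of B2])
    show "B2 (ebas a) (ebas b) = 0" for a b
      using assms unfolding invariant_def B2_def by (simp add: tapp_id_right tapp_id_left lin)
  qed (simp_all add: B2_def linear_form_def bilinear_expand algebra_simps)
  then show "pair \<xi> (x \<star> Tmap s \<eta>) = pair \<eta> (Tmap (flip s) \<xi> \<prec> x)"
    by (simp add: B2_def)
qed

lemma pair_succ_r:
  "pair (succ_r sc pr r \<zeta> \<eta>) v = - pair \<eta> (Tmap r \<zeta> \<cdot> v) + pair \<zeta> (v \<odot> Tmap (flip r) \<eta>)"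
  unfolding succ_r_def
  by (simp add: pair_dual_rep bilinear_op_linear_vmap bilinear_circ_op bilinear_odot_op
      sc_bilinear pr_bilinear)

lemma pair_prec_r:
  "pair (prec_r sc pr r \<zeta> \<eta>) v = - pair \<eta> (Tmap (flip r) \<zeta> \<prec> v) + pair \<zeta> (Tmap r \<eta> \<star> v)"
  unfolding prec_r_def
  by (simp add: pair_dual_rep bilinear_op_linear_vmap bilinear_star_op sc_bilinear pr_bilinear)

end

lemma LD_alg_bilinear_pair: "LD_alg sc pr \<Longrightarrow> bilinear_pair sc pr"
  unfolding LD_alg_def bilinear_pair_def by (elim conjE) (rule conjI)

(* Factorizability without the bijectivity of J; this already makes T and -T' homomorphisms. *)
locale quasitriangular = bilinear_pair sc pr
  for sc pr :: "('k::field,'n::finite) bop" +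
  fixes r :: "('k,'n) tens2"
  assumes Sr_zero: "Sr sc pr r = (\<lambda>a b c. 0)"
    and invariant_symmetric_part: "invariant sc pr (tadd r (flip r))"
begin

abbreviation T where "T \<equiv> Tmap r"
abbreviation T' where "T' \<equiv> Tmap (flip r)"
abbreviation J where "J \<equiv> Tmap (tadd r (flip r))"
abbreviation succ_dual (infixl "\<succ>\<^sub>r" 70) where "\<zeta> \<succ>\<^sub>r \<eta> \<equiv> succ_r sc pr r \<zeta> \<eta>"
abbreviation prec_dual (infixl "\<prec>\<^sub>r" 70) where "\<zeta> \<prec>\<^sub>r \<eta> \<equiv> prec_r sc pr r \<zeta> \<eta>"

lemma Sr_zero_pairing:
  "pair z (T y \<cdot> T x) = pair y (T x \<odot> T' z) + pair x (T' y \<succ> T' z)"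
proof -
  define G where
    "G x y z = pair z (T y \<cdot> T x) - pair y (T x \<odot> T' z) - pair x (T' y \<succ> T' z)" for x y z
  have G_basis: "G (ebas a) (ebas b) (ebas c) = 0" for a b c
  proof -
    have circ_basis: "pair (ebas c) (T (ebas b) \<cdot> T (ebas a))
       = (\<Sum>j\<in>UNIV. \<Sum>k\<in>UNIV. r b j * r a k * circ_op sc pr (ebas j) (ebas k) c)"
      by (subst bilinear_op_pair_expansion[OF bilinear_circ_op[OF sc_bilinear pr_bilinear]])
        (simp add: Tmap_ebas)
    have odot_basis: "pair (ebas b) (T (ebas a) \<odot> T' (ebas c))
       = (\<Sum>j\<in>UNIV. \<Sum>k\<in>UNIV. r a j * r k c * odot_op sc pr (ebas j) (ebas k) b)"
      by (subst bilinear_op_pair_expansion[OF bilinear_odot_op[OF sc_bilinear pr_bilinear]])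
        (simp add: Tmap_ebas flip_def)
    have succ_basis: "pair (ebas a) (T' (ebas b) \<succ> T' (ebas c))
       = (\<Sum>j\<in>UNIV. \<Sum>k\<in>UNIV. r j b * r k c * sc (ebas j) (ebas k) a)"
      by (subst bilinear_op_pair_expansion[OF sc_bilinear]) (simp add: Tmap_ebas flip_def)
    have "G (ebas a) (ebas b) (ebas c) = Sr sc pr r a b c"
      unfolding G_def Sr_reduced circ_basis odot_basis succ_basis
      by (subst (2) sum.swap) (simp add: mult.commute)
    then show ?thesis
      by (simp add: Sr_zero)
  qed
  have linear_x: "linear_form (\<lambda>x. G x y z)"
    and linear_y: "linear_form (\<lambda>y. G x y z)"
    and linear_z: "linear_form (\<lambda>z. G x y z)" for x y z
    by (simp_all add: G_def linear_form_def bilinear_expand algebra_simps)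
  have "G (ebas a) y z = 0" for a
    by (rule bilinear_form_eq_zeroI[OF linear_y linear_z G_basis])
  then have "G x y z = 0"
    by (rule linear_form_eq_zeroI[OF linear_x])
  then show ?thesis
    by (simp add: G_def algebra_simps)
qed

lemma pair_odot_J_right: "pair \<xi> (x \<odot> J \<eta>) = pair \<eta> (J \<xi> \<cdot> x)"
  using invariant_pairing_odot[OF invariant_symmetric_part] by (simp add: flip_tadd_flip)

lemma pair_star_J_right: "pair \<xi> (x \<star> J \<eta>) = pair \<eta> (J \<xi> \<prec> x)"
  using invariant_pairing_star[OF invariant_symmetric_part] by (simp add: flip_tadd_flip)

lemma pair_odot_J_left: "pair \<zeta> (J w \<odot> y) = - pair w (J \<zeta> \<succ> y)"
proof -
  have "pair \<zeta> (J w \<odot> y) = pair \<zeta> (y \<star> J w) - pair \<zeta> (y \<odot> J w)"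
    by (simp add: bilinear_expand)
  also have "\<dots> = pair w (J \<zeta> \<prec> y) - pair w (J \<zeta> \<cdot> y)"
    by (simp add: pair_star_J_right pair_odot_J_right)
  also have "\<dots> = - pair w (J \<zeta> \<succ> y)"
    by (simp add: bilinear_expand)
  finally show ?thesis .
qed

lemma pair_circ_J_right: "pair \<eta> (x \<cdot> J w) = - pair w (x \<succ> J \<eta>)"
proof -
  have "pair \<eta> (x \<cdot> J w) = pair \<eta> (x \<star> J w) - pair \<eta> (J w \<cdot> x)"
    by (simp add: bilinear_expand)
  also have "\<dots> = pair w (J \<eta> \<prec> x) - pair w (x \<odot> J \<eta>)"
    by (simp add: pair_star_J_right pair_odot_J_right)
  also have "\<dots> = - pair w (x \<succ> J \<eta>)"
    by (simp add: bilinear_expand)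
  finally show ?thesis .
qed

lemma pair_prec_J_right: "pair \<eta> (x \<prec> J w) = pair w (x \<prec> J \<eta>)"
proof -
  have symmetric: "pair \<eta> (x \<prec> J w) = - pair w (x \<succ> J \<eta>) - pair \<eta> (x \<succ> J w)" for \<eta> w
  proof -
    have "pair \<eta> (x \<prec> J w) = pair \<eta> (x \<cdot> J w) - pair \<eta> (x \<succ> J w)"
      by (simp add: bilinear_expand)
    then show ?thesis
      by (simp add: pair_circ_J_right)
  qed
  show ?thesis
    using symmetric[of \<eta> w] symmetric[of w \<eta>] by simp
qed

lemma Tmap_flip_succ_r: "T' (\<zeta> \<succ>\<^sub>r \<eta>) = vneg (T' \<zeta> \<succ> T' \<eta>)"
proof (rule vect_eqI)
  fix w
  have "pair w (T' (\<zeta> \<succ>\<^sub>r \<eta>)) = pair (\<zeta> \<succ>\<^sub>r \<eta>) (T w)"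
    by (simp add: pair_Tmap_adjoint[of w "flip r"])
  also have "\<dots> = - pair \<eta> (T \<zeta> \<cdot> T w) + pair \<zeta> (T w \<odot> T' \<eta>)"
    by (rule pair_succ_r)
  also have "\<dots> = pair w (vneg (T' \<zeta> \<succ> T' \<eta>))"
    by (simp add: Sr_zero_pairing)
  finally show "pair w (T' (\<zeta> \<succ>\<^sub>r \<eta>)) = pair w (vneg (T' \<zeta> \<succ> T' \<eta>))" .
qed

(* Split T' w = J w - T w: invariance moves J across the pairing and S(r) = 0 absorbs the rest. *)
lemma Tmap_succ_r: "T (\<zeta> \<succ>\<^sub>r \<eta>) = T \<zeta> \<succ> T \<eta>"
proof (rule vect_eqI)
  fix w
  have "pair w (T (\<zeta> \<succ>\<^sub>r \<eta>)) = pair (\<zeta> \<succ>\<^sub>r \<eta>) (T' w)"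
    by (rule pair_Tmap_adjoint)
  also have "\<dots> = - pair \<eta> (T \<zeta> \<cdot> T' w) + pair \<zeta> (T' w \<odot> T' \<eta>)"
    by (rule pair_succ_r)
  also have "\<dots> = - pair \<eta> (T \<zeta> \<cdot> J w) + pair \<eta> (T \<zeta> \<cdot> T w)
      + pair \<zeta> (J w \<odot> T' \<eta>) - pair \<zeta> (T w \<odot> T' \<eta>)"
    by (simp add: Tmap_tadd bilinear_expand algebra_simps)
  also have "\<dots> = pair w (T \<zeta> \<succ> J \<eta>) + pair \<eta> (T \<zeta> \<cdot> T w)
      - pair w (J \<zeta> \<succ> T' \<eta>) - pair \<zeta> (T w \<odot> T' \<eta>)"
    by (simp add: pair_circ_J_right pair_odot_J_left)
  also have "\<dots> = pair w (T \<zeta> \<succ> J \<eta>) + pair w (T' \<zeta> \<succ> T' \<eta>) - pair w (J \<zeta> \<succ> T' \<eta>)"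
    by (simp add: Sr_zero_pairing)
  also have "\<dots> = pair w (T \<zeta> \<succ> T \<eta>)"
    by (simp add: Tmap_tadd bilinear_expand algebra_simps)
  finally show "pair w (T (\<zeta> \<succ>\<^sub>r \<eta>)) = pair w (T \<zeta> \<succ> T \<eta>)" .
qed

lemma pair_T_star_T: "pair \<zeta> (T \<eta> \<star> T w) = pair \<eta> (T' \<zeta> \<prec> T w) - pair w (T' \<zeta> \<prec> T' \<eta>)"
proof -
  have "pair \<zeta> (T \<eta> \<star> T w) = pair \<zeta> (T \<eta> \<cdot> T w) + pair \<zeta> (T w \<cdot> T \<eta>)"
    by (simp add: star_op_def)
  also have "\<dots> = pair \<eta> (T w \<odot> T' \<zeta>) + pair w (T' \<eta> \<succ> T' \<zeta>)
      + pair w (T \<eta> \<odot> T' \<zeta>) + pair \<eta> (T' w \<succ> T' \<zeta>)"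
    by (simp add: Sr_zero_pairing)
  also have "\<dots> = pair \<eta> (J w \<succ> T' \<zeta>) + pair \<eta> (T' \<zeta> \<prec> T w)
      + pair w (J \<eta> \<odot> T' \<zeta>) - pair w (T' \<zeta> \<prec> T' \<eta>)"
    by (simp add: Tmap_tadd bilinear_expand algebra_simps)
  also have "\<dots> = pair \<eta> (T' \<zeta> \<prec> T w) - pair w (T' \<zeta> \<prec> T' \<eta>)"
    by (simp add: pair_odot_J_left)
  finally show ?thesis .
qed

lemma Tmap_flip_prec_r: "T' (\<zeta> \<prec>\<^sub>r \<eta>) = vneg (T' \<zeta> \<prec> T' \<eta>)"
proof (rule vect_eqI)
  fix w
  have "pair w (T' (\<zeta> \<prec>\<^sub>r \<eta>)) = pair (\<zeta> \<prec>\<^sub>r \<eta>) (T w)"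
    by (simp add: pair_Tmap_adjoint[of w "flip r"])
  also have "\<dots> = - pair \<eta> (T' \<zeta> \<prec> T w) + pair \<zeta> (T \<eta> \<star> T w)"
    by (rule pair_prec_r)
  also have "\<dots> = pair w (vneg (T' \<zeta> \<prec> T' \<eta>))"
    by (simp add: pair_T_star_T)
  finally show "pair w (T' (\<zeta> \<prec>\<^sub>r \<eta>)) = pair w (vneg (T' \<zeta> \<prec> T' \<eta>))" .
qed

lemma Tmap_prec_r: "T (\<zeta> \<prec>\<^sub>r \<eta>) = T \<zeta> \<prec> T \<eta>"
proof (rule vect_eqI)
  fix w
  have "pair w (T (\<zeta> \<prec>\<^sub>r \<eta>)) = pair (\<zeta> \<prec>\<^sub>r \<eta>) (T' w)"
    by (rule pair_Tmap_adjoint)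
  also have "\<dots> = - pair \<eta> (T' \<zeta> \<prec> T' w) + pair \<zeta> (T \<eta> \<star> T' w)"
    by (rule pair_prec_r)
  also have "\<dots> = - pair \<eta> (T' \<zeta> \<prec> J w) + pair \<eta> (T' \<zeta> \<prec> T w)
      + pair \<zeta> (T \<eta> \<star> J w) - pair \<zeta> (T \<eta> \<star> T w)"
    by (simp add: Tmap_tadd bilinear_expand algebra_simps)
  also have "\<dots> = - pair \<eta> (T' \<zeta> \<prec> J w) + pair \<zeta> (T \<eta> \<star> J w) + pair w (T' \<zeta> \<prec> T' \<eta>)"
    by (simp add: pair_T_star_T)
  also have "\<dots> = - pair w (T' \<zeta> \<prec> J \<eta>) + pair w (J \<zeta> \<prec> T \<eta>) + pair w (T' \<zeta> \<prec> T' \<eta>)"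
    by (simp add: pair_prec_J_right[of \<eta> _ w] pair_star_J_right)
  also have "\<dots> = pair w (T \<zeta> \<prec> T \<eta>)"
    by (simp add: Tmap_tadd bilinear_expand algebra_simps)
  finally show "pair w (T (\<zeta> \<prec>\<^sub>r \<eta>)) = pair w (T \<zeta> \<prec> T \<eta>)" .
qed

lemma Phi_succ_r: "Phi r (\<zeta> \<succ>\<^sub>r \<eta>) = prod_op sc (Phi r \<zeta>) (Phi r \<eta>)"
  by (simp add: Phi_def prod_op_def Tmap_succ_r Tmap_flip_succ_r bilinear_expand)

lemma Phi_prec_r: "Phi r (\<zeta> \<prec>\<^sub>r \<eta>) = prod_op pr (Phi r \<zeta>) (Phi r \<eta>)"
  by (simp add: Phi_def prod_op_def Tmap_prec_r Tmap_flip_prec_r bilinear_expand)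


lemma LD_alg_dual:
  assumes "LD_alg sc pr" and "inj J"
  shows "LD_alg (succ_r sc pr r) (prec_r sc pr r)"
proof (rule LD_alg_pullback[OF assms(1), where f = T and g = "\<lambda>\<zeta>. vneg (T' \<zeta>)"])
  show "linear_vmap (\<lambda>\<zeta>. vneg (T' \<zeta>))"
    by (simp add: linear_vmap_def Tmap_vadd Tmap_vscale vneg_vadd vneg_vscale)
  show "vneg (T' (\<zeta> \<succ>\<^sub>r \<eta>)) = vneg (T' \<zeta>) \<succ> vneg (T' \<eta>)"
    and "vneg (T' (\<zeta> \<prec>\<^sub>r \<eta>)) = vneg (T' \<zeta>) \<prec> vneg (T' \<eta>)" for \<zeta> \<eta>
    by (simp_all add: Tmap_flip_succ_r Tmap_flip_prec_r bilinear_expand)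
  show "\<zeta> = \<eta>" if "T \<zeta> = T \<eta>" and "vneg (T' \<zeta>) = vneg (T' \<eta>)" for \<zeta> \<eta>
  proof -
    have "T' \<zeta> = T' \<eta>"
      using that(2) by (metis vneg_vneg)
    then have "J \<zeta> = J \<eta>"
      using that(1) by (simp add: Tmap_tadd)
    then show ?thesis
      using assms(2) by (simp add: inj_eq)
  qed
qed (simp_all add: linear_vmap_Tmap Tmap_succ_r Tmap_prec_r)

end

theorem mainTheorem10:
  fixes sc pr :: "('k::field, 'n::finite) bop" and r :: "('k,'n) tens2"
  assumes LD: "LD_alg sc pr"
    and S0: "Sr sc pr r = (\<lambda>a b c. 0)"
    and inv: "invariant sc pr (tadd r (flip r))"
    and iso: "bij (Tmap (tadd r (flip r)))"
  shows "LD_subalg_prod sc pr (range (Phi r))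
    \<and> LD_alg (succ_r sc pr r) (prec_r sc pr r)
    \<and> (\<forall>\<zeta> \<eta>. Phi r (vadd \<zeta> \<eta>) = padd (Phi r \<zeta>) (Phi r \<eta>))
    \<and> (\<forall>c \<zeta>. Phi r (vscale c \<zeta>) = pscale c (Phi r \<zeta>))
    \<and> inj (Phi r)
    \<and> (\<forall>\<zeta> \<eta>. Phi r (succ_r sc pr r \<zeta> \<eta>) = prod_op sc (Phi r \<zeta>) (Phi r \<eta>))
    \<and> (\<forall>\<zeta> \<eta>. Phi r (prec_r sc pr r \<zeta> \<eta>) = prod_op pr (Phi r \<zeta>) (Phi r \<eta>))
    \<and> (\<forall>x. \<exists>!u. u \<in> range (Phi r) \<and> x = vsub (fst u) (snd u))"
proof -
  interpret quasitriangular sc pr r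
    by (intro quasitriangular.intro quasitriangular_axioms.intro LD_alg_bilinear_pair[OF LD] S0 inv)
  have J_inj: "inj (Tmap (tadd r (flip r)))"
    using iso by (rule bij_is_inj)
  have "LD_subalg_prod sc pr (range (Phi r))"
    by (rule LD_subalg_prod_range[where sc' = "succ_r sc pr r" and pr' = "prec_r sc pr r"])
      (simp_all add: Phi_vadd Phi_vscale Phi_succ_r Phi_prec_r)
  then show ?thesis
    using LD_alg_dual[OF LD J_inj] inj_Phi[OF J_inj] Phi_unique_decomposition[OF iso]
    by (simp add: Phi_vadd Phi_vscale Phi_succ_r Phi_prec_r)
qed

end
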